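(* Let $n\ge 1$ and let $r$ be an integer with $(n+1)/2 < r \le n$. Let $\theta=(\theta_1,\dots,\theta_n)\in\mathbb{R}^n$ and let $T_1,\dots,T_n$ be independent random variables with $T_i\sim N(\theta_i,1)$. Let $\Phi$ be the standard normal cumulative distribution function, and set $p_i = 1-\Phi(T_i)$ and $q_i=\Phi(T_i)=1-p_i$ for $i=1,\dots,n$. Let $p_{(1)}\le\dots\le p_{(n)}$ and $q_{(1)}\le\dots\le q_{(n)}$ denote the order statistics, and define the Bonferroni partial conjunction $p$-values $$p^+_{r/n}=(n-r+1)\,p_{(r)},\qquad p^-_{r/n}=(n-r+1)\,q_{(r)}.$$ Let $n^+=|\{i:\theta_i>0\}|$, $n^-=|\{i:\theta_i<0\}|$, and let $H_{r/n}$ be the null hypothesis $n^+<r$ and $n^-<r$. Then $p_{r/n}=\min\{p^+_{r/n},p^-_{r/n}\}$ is a valid $p$-value for $H_{r/n}$: for every $\alpha\in(0,1/2)$ and every $\theta\in\mathbb{R}^n$ with $n^+<r$ and $n^-<r$, $$\Pr_\theta\big(\min\{p^+_{r/n},p^-_{r/n}\}\le\alpha\big)\le\alpha.$$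
   Context: $H_{r/n}$ is the "$r$ out of $n$ directional replicability" null hypothesis: fewer than $r$ of the effects $\theta_i$ are positive and fewer than $r$ are negative. $p_i$ is the one-sided $p$-value for $\theta_i\le 0$ and $q_i$ the one-sided $p$-value for $\theta_i\ge 0$. *)

theory Defs
  imports "HOL-Probability.Probability"
begin

definition Phi :: "real \<Rightarrow> real" where
  "Phi x = measure (density lborel std_normal_density) {..x}"

(* k-th order statistic (1-indexed) of the values f 0, ..., f (n-1):
   ord_stat n f k = f_(k), where f_(1) <= ... <= f_(n) *)
definition ord_stat :: "nat \<Rightarrow> (nat \<Rightarrow> real) \<Rightarrow> nat \<Rightarrow> real" where
  "ord_stat n f k = sort (map f [0..<n]) ! (k - 1)"

definition T_law :: "nat \<Rightarrow> (nat \<Rightarrow> real) \<Rightarrow> (nat \<Rightarrow> real) measure" where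
  "T_law n \<theta> = PiM {..<n} (\<lambda>i. density lborel (normal_density (\<theta> i) 1))"

definition pval :: "(nat \<Rightarrow> real) \<Rightarrow> nat \<Rightarrow> real" where
  "pval T i = 1 - Phi (T i)"

definition qval :: "(nat \<Rightarrow> real) \<Rightarrow> nat \<Rightarrow> real" where
  "qval T i = Phi (T i)"

definition p_plus :: "nat \<Rightarrow> nat \<Rightarrow> (nat \<Rightarrow> real) \<Rightarrow> real" where
  "p_plus n r T = real (n - r + 1) * ord_stat n (pval T) r"

definition p_minus :: "nat \<Rightarrow> nat \<Rightarrow> (nat \<Rightarrow> real) \<Rightarrow> real" where
  "p_minus n r T = real (n - r + 1) * ord_stat n (qval T) r"

end

theory Submission
  imports Defs
begin

text \<open>
  Put \<open>c = \<alpha> / (n - r + 1)\<close>. If \<open>min p\<^sup>+ p\<^sup>- \<le> \<alpha>\<close>, then at least \<open>r\<close> of the \<open>p\<^sub>i\<close> or at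
  least \<open>r\<close> of the \<open>q\<^sub>i\<close> are \<open>\<le> c\<close>, so the rejection probability is at most the sum of two
  Poisson-binomial tails \<open>P(S\<^sub>a \<ge> r) + P(S\<^sub>b \<ge> r)\<close> with success probabilities
  \<open>a\<^sub>i = P(p\<^sub>i \<le> c)\<close> and \<open>b\<^sub>i = P(q\<^sub>i \<le> c)\<close>.
  For \<open>\<theta>\<^sub>i = 0\<close> both are \<open>\<le> c\<close>; for \<open>\<theta>\<^sub>i > 0\<close> the monotone likelihood ratio of the normal
  shift family confines \<open>(a\<^sub>i, b\<^sub>i)\<close> to the square \<open>[0,c]\<^sup>2\<close> together with the region below
  the segment from \<open>(c,c)\<close> to \<open>(1,0)\<close>, and symmetrically for \<open>\<theta>\<^sub>i < 0\<close>.
  The sum of the two tails is affine with nonnegative coefficients in each pair, hence it is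
  largest at extreme points: \<open>(c,c)\<close>, or \<open>(1,0)\<close> for a positive and \<open>(0,1)\<close> for a negative
  effect. There the tails become tails of one binomial \<open>Bin(N,c)\<close>, shifted by the numbers
  \<open>p, q < r\<close> of positive and negative effects, and elementary binomial inequalities bound
  their sum by \<open>(n + 1 - r) c = \<alpha>\<close>.
\<close>

section \<open>Poisson-binomial tails\<close>

text \<open>\<open>pbinom_tail a n k\<close> is the probability that at least \<open>k\<close> of \<open>n\<close> independent events
  with probabilities \<open>a 0, \<dots>, a (n - 1)\<close> occur.\<close>
fun pbinom_tail :: "(nat \<Rightarrow> real) \<Rightarrow> nat \<Rightarrow> nat \<Rightarrow> real" where
  "pbinom_tail a 0 k = (if k = 0 then 1 else 0)"
| "pbinom_tail a (Suc n) k =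
     (if k = 0 then 1 else a n * pbinom_tail a n (k - 1) + (1 - a n) * pbinom_tail a n k)"

abbreviation binom_tail :: "real \<Rightarrow> nat \<Rightarrow> nat \<Rightarrow> real" where
  "binom_tail c \<equiv> pbinom_tail (\<lambda>_. c)"

lemma pbinom_tail_0_right [simp]: "pbinom_tail a n 0 = 1"
  by (cases n) auto

lemma pbinom_tail_eq_0: "n < k \<Longrightarrow> pbinom_tail a n k = 0"
  by (induction n arbitrary: k) auto

lemma pbinom_tail_cong: "(\<And>i. i < n \<Longrightarrow> a i = b i) \<Longrightarrow> pbinom_tail a n k = pbinom_tail b n k"
  by (induction n arbitrary: k) auto

lemma pbinom_tail_bounds:
  assumes "\<forall>i<n. a i \<in> {0..1}"
  shows "pbinom_tail a n k \<in> {0..1}"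
  using assms
proof (induction n arbitrary: k)
  case (Suc n)
  then have a: "a n \<in> {0..1}" and "pbinom_tail a n j \<in> {0..1}" for j
    by auto
  then have "0 \<le> a n * pbinom_tail a n (k - 1) + (1 - a n) * pbinom_tail a n k"
    "a n * pbinom_tail a n (k - 1) + (1 - a n) * pbinom_tail a n k \<le> 1"
    by (auto intro: convex_bound_le)
  then show ?case by simp
qed simp

lemma decseq_pbinom_tail:
  assumes "\<forall>i<n. a i \<in> {0..1}"
  shows "decseq (pbinom_tail a n)"
  unfolding decseq_Suc_iff
proof
  show "pbinom_tail a n (Suc k) \<le> pbinom_tail a n k" for k
    using assms
  proof (induction n arbitrary: k)
    case (Suc n)
    then have a: "a n \<in> {0..1}" by auto
    show ?case
    proof (cases k)
      case 0
      have "pbinom_tail a n 1 \<le> 1"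
        using pbinom_tail_bounds[of n a 1] Suc.prems by auto
      then show ?thesis
        using 0 a mult_left_mono[of "pbinom_tail a n 1" 1 "1 - a n"] by simp
    next
      case (Suc m)
      have "pbinom_tail a n (Suc m) \<le> pbinom_tail a n m"
        "pbinom_tail a n (Suc (Suc m)) \<le> pbinom_tail a n (Suc m)"
        using Suc.IH Suc.prems by auto
      then show ?thesis
        using a Suc by (auto intro!: add_mono mult_left_mono)
    qed
  qed simp
qed

lemma pbinom_tail_mono:
  assumes "\<forall>i<n. a i \<in> {0..1}" "\<forall>i<n. b i \<in> {0..1}" "\<forall>i<n. a i \<le> b i"
  shows "pbinom_tail a n k \<le> pbinom_tail b n k"
  using assms
proof (induction n arbitrary: k)
  case (Suc n)
  show ?case
  proof (cases k)
    case (Suc m)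
    have IH: "pbinom_tail a n j \<le> pbinom_tail b n j" for j
      using Suc.IH Suc.prems by auto
    have ab: "a n \<in> {0..1}" "a n \<le> b n" using Suc.prems by auto
    have dec: "pbinom_tail b n k \<le> pbinom_tail b n m"
      using decseqD[OF decseq_pbinom_tail, of n b m k] Suc.prems Suc by auto
    have "a n * pbinom_tail a n m + (1 - a n) * pbinom_tail a n k
        \<le> a n * pbinom_tail b n m + (1 - a n) * pbinom_tail b n k"
      using ab IH by (auto intro!: add_mono mult_left_mono)
    also have "\<dots> \<le> b n * pbinom_tail b n m + (1 - b n) * pbinom_tail b n k"
      using mult_right_mono[of "a n" "b n" "pbinom_tail b n m - pbinom_tail b n k"] ab dec
      by (simp add: algebra_simps)
    finally show ?thesis using Suc by simp
  qed simp
qed simp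

lemma pbinom_tail_fun_upd:
  assumes "i < n"
  shows "pbinom_tail (a(i := x)) n k
    = (1 - x) * pbinom_tail (a(i := 0)) n k + x * pbinom_tail (a(i := 1)) n k"
  using assms
proof (induction n arbitrary: k)
  case (Suc n)
  show ?case
  proof (cases "i = n")
    case True
    have "pbinom_tail (a(n := y)) n j = pbinom_tail a n j" for y j
      by (rule pbinom_tail_cong) simp
    then show ?thesis
      using True by (simp only: pbinom_tail.simps fun_upd_same) (simp add: algebra_simps)
  next
    case False
    with Suc.prems have "i < n" by simp
    from False have step: "pbinom_tail (a(i := y)) (Suc n) k = (if k = 0 then 1 else
        a n * pbinom_tail (a(i := y)) n (k - 1) + (1 - a n) * pbinom_tail (a(i := y)) n k)" for y
      by simp
    show ?thesis
      unfolding step Suc.IH[OF \<open>i < n\<close>] by (simp add: algebra_simps)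
  qed
qed simp

lemma pbinom_tail_complement:
  assumes "k \<le> n + 1"
  shows "pbinom_tail (\<lambda>i. 1 - a i) n (n + 1 - k) = 1 - pbinom_tail a n k"
  using assms
proof (induction n arbitrary: k)
  case 0
  then show ?case by (cases k) auto
next
  case (Suc n)
  let ?b = "\<lambda>i. 1 - a i"
  consider "k = 0" | "k = n + 2" | "1 \<le> k" "k \<le> n + 1" using Suc.prems by linarith
  then show ?case
  proof cases
    case 3
    define j where "j = n + 1 - k"
    have j: "Suc n + 1 - k = Suc j" "n + 1 - (k - 1) = Suc j"
      using 3 unfolding j_def by auto
    have "pbinom_tail ?b (Suc n) (Suc n + 1 - k)
        = (1 - a n) * pbinom_tail ?b n j + a n * pbinom_tail ?b n (Suc j)"
      unfolding j(1) by simp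
    also have "\<dots> = (1 - a n) * (1 - pbinom_tail a n k) + a n * (1 - pbinom_tail a n (k - 1))"
    proof -
      have "pbinom_tail ?b n j = 1 - pbinom_tail a n k"
        using Suc.IH[of k] 3 unfolding j_def by simp
      moreover have "pbinom_tail ?b n (Suc j) = 1 - pbinom_tail a n (k - 1)"
        using Suc.IH[of "k - 1"] 3 unfolding j(2) by simp
      ultimately show ?thesis by simp
    qed
    also have "\<dots> = 1 - pbinom_tail a (Suc n) k"
      using 3 by (simp add: algebra_simps)
    finally show ?thesis .
  qed (simp_all add: pbinom_tail_eq_0)
qed

section \<open>Binomial tail inequalities\<close>

lemma binom_tail_bounds: "c \<in> {0..1} \<Longrightarrow> binom_tail c N k \<in> {0..1}"
  by (rule pbinom_tail_bounds) simp

lemma binom_tail_Suc_le: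
  assumes c: "c \<in> {0..1}" and K: "1 \<le> K" "K \<le> N + 1"
  shows "binom_tail c (Suc N) K \<le> real (N + 2 - K) * c * binom_tail c N (K - 1)"
  using K
proof (induction N arbitrary: K)
  case (Suc N)
  let ?A = "binom_tail c (Suc N) (K - 1)" and ?B = "binom_tail c (Suc N) K"
  have step: "binom_tail c (Suc (Suc N)) K = c * ?A + (1 - c) * ?B"
    using Suc.prems by simp
  show ?case
  proof (cases "K = N + 2")
    case True
    then have "?B = 0" by (intro pbinom_tail_eq_0) simp
    then show ?thesis using True step by simp
  next
    case False
    define m where "m = real (N + 2 - K)"
    have low: "(1 - c) * binom_tail c N (K - 1) \<le> ?A"
    proof (cases "K = 1")
      case False
      then obtain j where "K = Suc (Suc j)"
        using Suc.prems by (cases K; cases "K - 1") auto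
      then show ?thesis
        using c binom_tail_bounds[OF c, of N j] by simp
    qed (use c in simp)
    have "?B \<le> m * c * binom_tail c N (K - 1)"
      using Suc.IH[of K] Suc.prems False unfolding m_def by simp
    then have "(1 - c) * ?B \<le> (1 - c) * (m * c * binom_tail c N (K - 1))"
      by (rule mult_left_mono) (use c in simp)
    also have "\<dots> = m * c * ((1 - c) * binom_tail c N (K - 1))"
      by (simp only: mult_ac)
    also have "\<dots> \<le> m * c * ?A"
      using low c unfolding m_def by (intro mult_left_mono) auto
    finally have "(1 - c) * ?B \<le> m * c * ?A" .
    then have "binom_tail c (Suc (Suc N)) K \<le> (m + 1) * c * ?A"
      unfolding step by (simp add: algebra_simps)
    moreover have "real (Suc N + 2 - K) = m + 1"
      using False Suc.prems unfolding m_def by auto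
    ultimately show ?thesis by simp
  qed
qed simp

lemma binom_tail_1_add_2_le:
  assumes c: "c \<in> {0..1}"
  shows "binom_tail c N 1 + binom_tail c N 2 \<le> real N * c"
proof (induction N)
  case (Suc N)
  have "binom_tail c (Suc N) 1 + binom_tail c (Suc N) 2
      = c * (1 + binom_tail c N 1) + (1 - c) * (binom_tail c N 1 + binom_tail c N 2)"
    by (simp add: algebra_simps numeral_2_eq_2)
  also have "\<dots> \<le> c * (1 + real N * c) + (1 - c) * (real N * c)"
    using Suc.IH binom_tail_bounds[OF c, of N 2] c by (intro add_mono mult_left_mono) auto
  also have "\<dots> = real (Suc N) * c"
    by (simp add: algebra_simps)
  finally show ?case .
qed (simp add: numeral_2_eq_2)

lemma binom_tail_add_Suc_le:
  assumes c: "c \<in> {0..1}" and K: "1 \<le> K"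
  shows "binom_tail c N K + binom_tail c N (K + 1) \<le> real (N + 1 - K) * c"
  using K
proof (induction N arbitrary: K)
  case (Suc N)
  consider "K = 1" | "2 \<le> K" "K \<le> N + 1" | "N + 2 \<le> K"
    using Suc.prems by linarith
  then show ?case
  proof cases
    case 1
    then show ?thesis using binom_tail_1_add_2_le[OF c, of "Suc N"] by (simp add: numeral_2_eq_2)
  next
    case 2
    define m where "m = real (N + 1 - K)"
    have "binom_tail c (Suc N) K + binom_tail c (Suc N) (K + 1)
        = c * (binom_tail c N (K - 1) + binom_tail c N K)
          + (1 - c) * (binom_tail c N K + binom_tail c N (K + 1))"
      using 2 by (simp add: algebra_simps)
    also have "\<dots> \<le> c * ((m + 1) * c) + (1 - c) * (m * c)"
    proof -
      have "K - 1 + 1 = K" "real (N + 1 - (K - 1)) = m + 1" "1 \<le> K - 1"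
        using 2 unfolding m_def by auto
      then have "binom_tail c N (K - 1) + binom_tail c N K \<le> (m + 1) * c"
        using Suc.IH[of "K - 1"] by simp
      moreover have "binom_tail c N K + binom_tail c N (K + 1) \<le> m * c"
        using Suc.IH[of K] 2 unfolding m_def by simp
      ultimately show ?thesis
        using c by (intro add_mono mult_left_mono) auto
    qed
    also have "\<dots> \<le> (m + 1) * c"
      using c by (simp add: algebra_simps mult_left_le)
    also have "m + 1 = real (Suc N + 1 - K)"
      using 2 unfolding m_def by auto
    finally show ?thesis .
  next
    case 3
    then show ?thesis by (simp add: pbinom_tail_eq_0)
  qed
qed simp

text \<open>For \<open>c \<le> 1/2\<close> the number of failures dominates the number of successes.\<close>
lemma binom_tail_add_reflect_le:
  assumes c: "0 \<le> c" "c \<le> 1/2" and s: "s \<le> M + 1"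
  shows "binom_tail c M s + binom_tail c M (M + 1 - s) \<le> 1"
proof -
  have "binom_tail c M (M + 1 - s) \<le> binom_tail (1 - c) M (M + 1 - s)"
    using c by (intro pbinom_tail_mono) auto
  also have "\<dots> = 1 - binom_tail c M s"
    using pbinom_tail_complement[OF s, of "\<lambda>_. c"] by simp
  finally show ?thesis by simp
qed

lemma binom_tail_le_half:
  assumes c: "0 \<le> c" "c \<le> 1/2" and s: "M + 1 \<le> 2 * s"
  shows "binom_tail c M s \<le> 1/2"
proof (cases "s \<le> M + 1")
  case True
  have "binom_tail c M s \<le> binom_tail c M (M + 1 - s)"
    using s c by (intro decseqD[OF decseq_pbinom_tail]) auto
  then show ?thesis
    using binom_tail_add_reflect_le[OF c True] by simp
qed (simp add: pbinom_tail_eq_0)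

lemma binom_tail_twice_le:
  assumes c: "0 \<le> c" "c \<le> 1/2" and K: "1 \<le> K" "N + 2 \<le> 2 * K"
  shows "2 * binom_tail c N K \<le> real (N + 1 - K) * c"
proof (cases N)
  case (Suc N')
  have c1: "c \<in> {0..1}" using c by simp
  have "binom_tail c N K \<le> real (N' + 2 - K) * c * binom_tail c N' (K - 1)"
  proof (cases "K \<le> N' + 1")
    case True
    then show ?thesis unfolding Suc by (rule binom_tail_Suc_le[OF c1 K(1)])
  qed (simp add: Suc pbinom_tail_eq_0)
  also have "\<dots> \<le> real (N' + 2 - K) * c * (1/2)"
    using binom_tail_le_half[OF c, of N' "K - 1"] c K Suc by (intro mult_left_mono) auto
  finally show ?thesis using Suc by simp
qed (use K in \<open>simp add: pbinom_tail_eq_0\<close>)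

lemma binom_tail_pair_le:
  assumes c: "0 \<le> c" "c \<le> 1/2" and pq: "p < r" "q < r"
    and n: "N + p + q = n" "n + 2 \<le> 2 * r"
  shows "binom_tail c N (r - p) + binom_tail c N (r - q) \<le> real (n + 1 - r) * c"
proof -
  have ordered: "binom_tail c N (r - p) + binom_tail c N (r - q) \<le> real (n + 1 - r) * c"
    if "q \<le> p" "p < r" "N + p + q = n" for p q
  proof -
    have K: "1 \<le> r - p" using that by simp
    have "binom_tail c N (r - p) + binom_tail c N (r - q) \<le> real (N + 1 - (r - p)) * c"
    proof (cases "q = p")
      case True
      then show ?thesis
        using binom_tail_twice_le[OF c K, of N] that n by simp
    next
      case False
      then have "binom_tail c N (r - q) \<le> binom_tail c N (r - p + 1)"
        using that c by (intro decseqD[OF decseq_pbinom_tail]) auto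
      then show ?thesis
        using binom_tail_add_Suc_le[OF _ K, of c N] c by simp
    qed
    also have "\<dots> \<le> real (n + 1 - r) * c"
      using c that by (intro mult_right_mono) auto
    finally show ?thesis .
  qed
  show ?thesis
  proof (cases "q \<le> p")
    case False
    then show ?thesis using ordered[of p q] pq n by (simp add: add_ac)
  qed (use ordered pq n in simp)
qed

section \<open>Reduction to extreme points\<close>

text \<open>For an effect \<open>\<theta>\<^sub>i > 0\<close> the pair \<open>(P(p\<^sub>i \<le> c), P(q\<^sub>i \<le> c))\<close> lies in this region:
  the square \<open>[0,c]\<^sup>2\<close> or, right of \<open>x = c\<close>, below the segment from \<open>(c,c)\<close> to \<open>(1,0)\<close>.\<close>
definition pos_pair :: "real \<Rightarrow> real \<Rightarrow> real \<Rightarrow> bool" where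
  "pos_pair c x y \<longleftrightarrow> (x \<le> c \<and> y \<le> c) \<or> (c \<le> x \<and> y * (1 - c) \<le> c * (1 - x))"

definition admissible_at :: "real \<Rightarrow> nat set \<Rightarrow> nat set \<Rightarrow> nat \<Rightarrow> real \<Rightarrow> real \<Rightarrow> bool" where
  "admissible_at c P Q i x y \<longleftrightarrow> x \<in> {0..1} \<and> y \<in> {0..1} \<and>
     (if i \<in> P then pos_pair c x y else if i \<in> Q then pos_pair c y x else x \<le> c \<and> y \<le> c)"

definition admissible :: "real \<Rightarrow> nat set \<Rightarrow> nat set \<Rightarrow> nat \<Rightarrow> (nat \<Rightarrow> real) \<Rightarrow> (nat \<Rightarrow> real) \<Rightarrow> bool"
  where "admissible c P Q n a b \<longleftrightarrow> (\<forall>i<n. admissible_at c P Q i (a i) (b i))"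

definition extremal_at :: "real \<Rightarrow> nat set \<Rightarrow> nat set \<Rightarrow> nat \<Rightarrow> real \<Rightarrow> real \<Rightarrow> bool" where
  "extremal_at c P Q i x y \<longleftrightarrow>
     (x = c \<and> y = c) \<or> (i \<in> P \<and> x = 1 \<and> y = 0) \<or> (i \<in> Q \<and> x = 0 \<and> y = 1)"

lemma pos_pair_affine_le_max:
  assumes "pos_pair c x y" "x \<le> 1" "0 \<le> y" "c < 1" "0 \<le> X" "0 \<le> Y"
  shows "x * X + y * Y \<le> max X (c * X + c * Y)"
proof (cases "x \<le> c \<and> y \<le> c")
  case True
  then have "x * X + y * Y \<le> c * X + c * Y"
    using assms by (intro add_mono mult_right_mono) auto
  then show ?thesis by simp
next
  case False
  with assms(1) have x: "c \<le> x" and y: "y * (1 - c) \<le> c * (1 - x)"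
    by (auto simp: pos_pair_def)
  define l where "l = (1 - x) / (1 - c)"
  have l: "0 \<le> l" "l \<le> 1" "y \<le> l * c"
    using assms x y unfolding l_def by (auto simp: field_simps)
  have "l * (1 - c) = 1 - x"
    unfolding l_def using assms(4) by simp
  then have "x = (1 - l) + l * c"
    by (simp add: algebra_simps)
  then have "x * X + y * Y \<le> ((1 - l) + l * c) * X + (l * c) * Y"
    using l assms by (intro add_mono mult_right_mono) auto
  also have "\<dots> = (1 - l) * X + l * (c * X + c * Y)"
    by (simp add: algebra_simps)
  also have "\<dots> \<le> max X (c * X + c * Y)"
    by (rule convex_bound_le) (use l in auto)
  finally show ?thesis .
qed

lemma admissible_at_le_extremal:
  assumes "admissible_at c P Q i x y" "0 \<le> c" "c < 1" "0 \<le> X" "0 \<le> Y"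
  shows "\<exists>x' y'. admissible_at c P Q i x' y' \<and> extremal_at c P Q i x' y' \<and>
           x * X + y * Y \<le> x' * X + y' * Y"
proof -
  have cc: "admissible_at c P Q i c c" "extremal_at c P Q i c c"
    using assms by (auto simp: admissible_at_def extremal_at_def pos_pair_def)
  consider "i \<in> P" | "i \<notin> P" "i \<in> Q" | "i \<notin> P" "i \<notin> Q" by blast
  then show ?thesis
  proof cases
    case 1
    then have "x * X + y * Y \<le> 1 * X + 0 * Y \<or> x * X + y * Y \<le> c * X + c * Y"
      using assms pos_pair_affine_le_max[of c x y X Y] by (auto simp: admissible_at_def)
    moreover have "admissible_at c P Q i 1 0" "extremal_at c P Q i 1 0"
      using 1 assms by (auto simp: admissible_at_def extremal_at_def pos_pair_def)
    ultimately show ?thesis using cc by blast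
  next
    case 2
    then have "x * X + y * Y \<le> 0 * X + 1 * Y \<or> x * X + y * Y \<le> c * X + c * Y"
      using assms pos_pair_affine_le_max[of c y x Y X] by (auto simp: admissible_at_def)
    moreover have "admissible_at c P Q i 0 1" "extremal_at c P Q i 0 1"
      using 2 assms by (auto simp: admissible_at_def extremal_at_def pos_pair_def)
    ultimately show ?thesis using cc by blast
  next
    case 3
    then have "x * X + y * Y \<le> c * X + c * Y"
      using assms by (intro add_mono mult_right_mono) (auto simp: admissible_at_def)
    then show ?thesis using cc by blast
  qed
qed

lemma admissible_extremal_at:
  assumes adm: "admissible c P Q n a b" and c: "0 \<le> c" "c < 1" and i: "i < n"
  shows "\<exists>x y. admissible c P Q n (a(i := x)) (b(i := y)) \<and> extremal_at c P Q i x y \<and>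
    pbinom_tail a n k + pbinom_tail b n l
      \<le> pbinom_tail (a(i := x)) n k + pbinom_tail (b(i := y)) n l"
proof -
  have ab: "\<forall>j<n. a j \<in> {0..1}" "\<forall>j<n. b j \<in> {0..1}"
    using adm by (auto simp: admissible_def admissible_at_def)
  define X where "X = pbinom_tail (a(i := 1)) n k - pbinom_tail (a(i := 0)) n k"
  define Y where "Y = pbinom_tail (b(i := 1)) n l - pbinom_tail (b(i := 0)) n l"
  have XY: "0 \<le> X" "0 \<le> Y"
    unfolding X_def Y_def using ab by (auto intro!: pbinom_tail_mono)
  have F: "pbinom_tail (a(i := x)) n k + pbinom_tail (b(i := y)) n l
      = pbinom_tail (a(i := 0)) n k + pbinom_tail (b(i := 0)) n l + x * X + y * Y" for x y
    unfolding X_def Y_def pbinom_tail_fun_upd[OF i, of a x] pbinom_tail_fun_upd[OF i, of b y]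
    by (simp add: algebra_simps)
  have "admissible_at c P Q i (a i) (b i)"
    using adm i by (simp add: admissible_def)
  then obtain x y where xy: "admissible_at c P Q i x y" "extremal_at c P Q i x y"
    and le: "a i * X + b i * Y \<le> x * X + y * Y"
    using admissible_at_le_extremal[OF _ c XY] by blast
  have "admissible c P Q n (a(i := x)) (b(i := y))"
    using adm xy(1) by (auto simp: admissible_def)
  moreover have "pbinom_tail a n k + pbinom_tail b n l
      \<le> pbinom_tail (a(i := x)) n k + pbinom_tail (b(i := y)) n l"
    using F[of "a i" "b i"] F[of x y] le by simp
  ultimately show ?thesis using xy(2) by blast
qed

lemma admissible_extremal:
  assumes adm: "admissible c P Q n a b" and c: "0 \<le> c" "c < 1"
  shows "\<exists>a' b'. (\<forall>i<n. extremal_at c P Q i (a' i) (b' i)) \<and>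
    pbinom_tail a n k + pbinom_tail b n l \<le> pbinom_tail a' n k + pbinom_tail b' n l"
proof -
  have "\<exists>a' b'. admissible c P Q n a' b' \<and> (\<forall>i<m. extremal_at c P Q i (a' i) (b' i)) \<and>
    pbinom_tail a n k + pbinom_tail b n l \<le> pbinom_tail a' n k + pbinom_tail b' n l"
    if "m \<le> n" for m
    using that
  proof (induction m)
    case 0
    then show ?case using adm by blast
  next
    case (Suc m)
    then obtain a' b' where adm': "admissible c P Q n a' b'"
      and ext: "\<forall>i<m. extremal_at c P Q i (a' i) (b' i)"
      and le: "pbinom_tail a n k + pbinom_tail b n l \<le> pbinom_tail a' n k + pbinom_tail b' n l"
      by auto
    obtain x y where adm'': "admissible c P Q n (a'(m := x)) (b'(m := y))"
      and "extremal_at c P Q m x y"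
      and le': "pbinom_tail a' n k + pbinom_tail b' n l
         \<le> pbinom_tail (a'(m := x)) n k + pbinom_tail (b'(m := y)) n l"
      using admissible_extremal_at[OF adm' c, of m k l] Suc.prems by auto
    with ext have "\<forall>i<Suc m. extremal_at c P Q i ((a'(m := x)) i) ((b'(m := y)) i)"
      by (auto simp: less_Suc_eq)
    with adm'' le le' show ?case
      by (blast intro: order.trans)
  qed
  then show ?thesis by blast
qed

lemma card_Collect_less_Suc:
  "card {i. i < Suc n \<and> P i} = card {i. i < n \<and> P i} + (if P n then 1 else 0)"
proof -
  have "{i. i < Suc n \<and> P i} = (if P n then insert n {i. i < n \<and> P i} else {i. i < n \<and> P i})"
    by (auto simp: less_Suc_eq)
  then show ?thesis by simp
qed

lemma pbinom_tail_three_valued: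
  assumes c: "c \<noteq> 0" "c \<noteq> 1" and a: "\<forall>i<n. a i \<in> {0, 1, c}"
  shows "pbinom_tail a n k
    = binom_tail c (card {i. i < n \<and> a i = c}) (k - card {i. i < n \<and> a i = 1})"
  using a
proof (induction n arbitrary: k)
  case (Suc n)
  let ?C = "card {i. i < n \<and> a i = c}" and ?O = "card {i. i < n \<and> a i = 1}"
  have IH: "pbinom_tail a n j = binom_tail c ?C (j - ?O)" for j
    using Suc by simp
  from Suc.prems consider "a n = 0" | "a n = 1" | "a n = c" by auto
  then show ?case
  proof cases
    case 3
    show ?thesis
    proof (cases "k \<le> ?O")
      case False
      then have "k - ?O = Suc (k - 1 - ?O)" by simp
      then show ?thesis using 3 c IH False by (simp add: card_Collect_less_Suc)
    qed (use 3 c IH in \<open>simp add: card_Collect_less_Suc\<close>)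
  qed (use c IH in \<open>simp_all add: card_Collect_less_Suc\<close>)
qed simp

lemma admissible_pbinom_tail_le:
  assumes adm: "admissible c P Q n a b" and c: "0 < c" "c \<le> 1/2"
    and PQ: "finite P" "finite Q" "card P < r" "card Q < r" and r: "n + 2 \<le> 2 * r"
  shows "pbinom_tail a n r + pbinom_tail b n r \<le> real (n + 1 - r) * c"
proof -
  obtain a' b' where ext: "\<forall>i<n. extremal_at c P Q i (a' i) (b' i)"
    and le: "pbinom_tail a n r + pbinom_tail b n r \<le> pbinom_tail a' n r + pbinom_tail b' n r"
    using admissible_extremal[OF adm] c by force
  define C where "C = {i. i < n \<and> a' i = c}"
  define A where "A = {i. i < n \<and> a' i = 1}"
  define B where "B = {i. i < n \<and> b' i = 1}"
  have "pbinom_tail a' n r = binom_tail c (card C) (r - card A)"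
    unfolding C_def A_def using c ext by (intro pbinom_tail_three_valued) (auto simp: extremal_at_def)
  moreover have "{i. i < n \<and> b' i = c} = C"
    unfolding C_def using c ext by (auto simp: extremal_at_def)
  then have "pbinom_tail b' n r = binom_tail c (card C) (r - card B)"
    unfolding B_def using c ext pbinom_tail_three_valued[of c n b' r]
    by (auto simp: extremal_at_def)
  moreover have "card A < r" "card B < r"
    using PQ card_mono[of P A] card_mono[of Q B] ext c
    unfolding A_def B_def by (fastforce simp: extremal_at_def)+
  moreover have "card C + card A + card B = n"
  proof -
    have "C \<union> A \<union> B = {..<n}" "C \<inter> A = {}" "(C \<union> A) \<inter> B = {}"
      using ext c unfolding A_def B_def C_def by (auto simp: extremal_at_def)
    then show ?thesis
      by (metis card_Un_disjoint card_lessThan finite_Un finite_lessThan)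
  qed
  ultimately show ?thesis
    using binom_tail_pair_le[of c "card A" r "card B" "card C" n] c r le by simp
qed

section \<open>Counting events in a product of probability spaces\<close>

lemma card_Collect_less_eq_sum_indicator:
  fixes n :: nat
  shows "card {i. i < n \<and> x i \<in> U i} = (\<Sum>i<n. indicator (U i) (x i) :: nat)"
  by (induction n) (simp_all add: card_Collect_less_Suc indicator_def)

lemma sets_PiM_count_ge:
  fixes M :: "nat \<Rightarrow> 'a measure"
  assumes [measurable]: "\<And>i. U i \<in> sets (M i)"
  shows "{x \<in> space (PiM {..<n} M). k \<le> card {i. i < n \<and> x i \<in> U i}} \<in> sets (PiM {..<n} M)"
  unfolding card_Collect_less_eq_sum_indicator by measurable

lemma card_Collect_less_Suc_fun_upd:
  "card {i. i < Suc n \<and> (x(n := y)) i \<in> U i}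
    = card {i. i < n \<and> x i \<in> U i} + (if y \<in> U n then 1 else 0)"
proof -
  have "{i. i < n \<and> (x(n := y)) i \<in> U i} = {i. i < n \<and> x i \<in> U i}"
    by auto
  then show ?thesis
    using card_Collect_less_Suc[of n "\<lambda>i. (x(n := y)) i \<in> U i"] by simp
qed

lemma (in prob_space) nn_integral_if_in:
  assumes U: "U \<in> events" and "0 \<le> u" "0 \<le> v"
  shows "(\<integral>\<^sup>+y. ennreal (if y \<in> U then u else v) \<partial>M) = ennreal (prob U * u + (1 - prob U) * v)"
proof -
  have "(\<integral>\<^sup>+y. ennreal (if y \<in> U then u else v) \<partial>M)
      = (\<integral>\<^sup>+y. ennreal u * indicator U y + ennreal v * indicator (space M - U) y \<partial>M)"
    by (intro nn_integral_cong) (auto simp: indicator_def)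
  also have "\<dots> = ennreal u * emeasure M U + ennreal v * emeasure M (space M - U)"
    using U by (subst nn_integral_add) (auto simp: nn_integral_cmult_indicator)
  also have "\<dots> = ennreal (prob U * u + (1 - prob U) * v)"
    using assms prob_compl[OF U]
    by (simp add: emeasure_eq_measure ennreal_mult'[symmetric] mult.commute
        del: ennreal_plus flip: ennreal_plus)
  finally show ?thesis .
qed

lemma emeasure_PiM_count_ge:
  fixes M :: "nat \<Rightarrow> 'a measure"
  assumes M: "\<And>i. prob_space (M i)" and U: "\<And>i. U i \<in> sets (M i)"
  shows "emeasure (PiM {..<n} M) {x \<in> space (PiM {..<n} M). k \<le> card {i. i < n \<and> x i \<in> U i}}
    = ennreal (pbinom_tail (\<lambda>i. measure (M i) (U i)) n k)"
proof (induction n arbitrary: k)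
  case 0
  interpret prob_space "PiM {..<0::nat} M" by (rule prob_space_PiM) (rule M)
  show ?case using emeasure_space_1 by simp
next
  case (Suc n)
  interpret product_prob_space M by (rule product_prob_spaceI) (rule M)
  let ?a = "\<lambda>i. measure (M i) (U i)"
  let ?E = "\<lambda>m k. {x \<in> space (PiM {..<m} M). k \<le> card {i. i < m \<and> x i \<in> U i}}"
  let ?k = "\<lambda>y. if y \<in> U n then k - 1 else k"
  have E: "?E m j \<in> sets (PiM {..<m} M)" for m j
    by (rule sets_PiM_count_ge[OF U])
  txt \<open>Fixing the last coordinate \<open>y\<close> leaves the event that at least \<open>?k y\<close> of the
    first \<open>n\<close> events occur; this is the recursion defining \<open>pbinom_tail\<close>.\<close>
  have slice: "indicator (?E (Suc n) k) (x(n := y)) = (indicator (?E n (?k y)) x :: ennreal)"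
    if x: "x \<in> space (PiM {..<n} M)" and y: "y \<in> space (M n)" for x y
  proof -
    have "x(n := y) \<in> space (PiM {..<Suc n} M)"
      using x y unfolding space_PiM lessThan_Suc by (intro PiE_fun_upd) auto
    moreover have "k \<le> card {i. i < Suc n \<and> (x(n := y)) i \<in> U i}
        \<longleftrightarrow> ?k y \<le> card {i. i < n \<and> x i \<in> U i}"
      unfolding card_Collect_less_Suc_fun_upd by auto
    ultimately show ?thesis
      using x by (simp add: indicator_def)
  qed
  have nonneg: "0 \<le> pbinom_tail ?a n j" for j
    using pbinom_tail_bounds[of n ?a j] M by (simp add: prob_space.prob_le_1)
  have "emeasure (PiM {..<Suc n} M) (?E (Suc n) k)
      = (\<integral>\<^sup>+x. indicator (?E (Suc n) k) x \<partial>PiM {..<Suc n} M)"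
    by (rule nn_integral_indicator[OF E, symmetric])
  also have "\<dots> = (\<integral>\<^sup>+y. (\<integral>\<^sup>+x. indicator (?E (Suc n) k) (x(n := y)) \<partial>PiM {..<n} M) \<partial>M n)"
  proof -
    have "indicator (?E (Suc n) k) \<in> borel_measurable (PiM {..<Suc n} M)"
      using E by (rule borel_measurable_indicator)
    then show ?thesis
      unfolding lessThan_Suc by (rule product_nn_integral_insert_rev[rotated 2]) simp_all
  qed
  also have "\<dots> = (\<integral>\<^sup>+y. ennreal (if y \<in> U n then pbinom_tail ?a n (k - 1) else pbinom_tail ?a n k) \<partial>M n)"
    by (intro nn_integral_cong)
      (simp add: slice nn_integral_indicator[OF E] Suc.IH cong: nn_integral_cong)
  also have "\<dots> = ennreal (?a n * pbinom_tail ?a n (k - 1) + (1 - ?a n) * pbinom_tail ?a n k)"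
    by (rule prob_space.nn_integral_if_in[OF M U nonneg nonneg])
  also have "\<dots> = ennreal (pbinom_tail ?a (Suc n) k)"
    by (cases "k = 0") (auto simp: algebra_simps)
  finally show ?case .
qed

lemma measure_PiM_count_ge:
  fixes M :: "nat \<Rightarrow> 'a measure"
  assumes "\<And>i. prob_space (M i)" "\<And>i. U i \<in> sets (M i)"
  shows "measure (PiM {..<n} M) {x \<in> space (PiM {..<n} M). k \<le> card {i. i < n \<and> x i \<in> U i}}
    = pbinom_tail (\<lambda>i. measure (M i) (U i)) n k"
proof -
  have "\<forall>i<n. measure (M i) (U i) \<in> {0..1}"
    using assms(1) by (simp add: prob_space.prob_le_1)
  then show ?thesis
    using emeasure_PiM_count_ge[OF assms] pbinom_tail_bounds by (simp add: measure_def)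
qed

section \<open>The normal shift family and continuous distribution functions\<close>

abbreviation normal_measure :: "real \<Rightarrow> real measure" where
  "normal_measure t \<equiv> density lborel (normal_density t 1)"

lemma prob_space_normal_measure: "prob_space (normal_measure t)"
  by (rule prob_space_normal_density) simp

lemma emeasure_eq_measure_normal_measure:
  "emeasure (normal_measure t) A = ennreal (measure (normal_measure t) A)"
  by (rule finite_measure.emeasure_eq_measure[OF prob_space.finite_measure[OF prob_space_normal_measure]])

lemma normal_density_shift:
  "normal_density t 1 x = normal_density 0 1 x * exp (t * x - t\<^sup>2 / 2)"
proof -
  have "exp (- ((x - t)\<^sup>2) / 2) = exp (- ((x - 0)\<^sup>2) / 2) * exp (t * x - t\<^sup>2 / 2)"
    unfolding exp_add[symmetric] by (simp add: power2_eq_square field_simps)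
  then show ?thesis unfolding normal_density_def by simp
qed

lemma emeasure_normal_measure_shift:
  assumes [measurable]: "A \<in> sets borel"
  shows "emeasure (normal_measure t) A
    = (\<integral>\<^sup>+x. ennreal (exp (t * x - t\<^sup>2 / 2)) * indicator A x \<partial>normal_measure 0)"
proof -
  have "emeasure (normal_measure t) A
      = (\<integral>\<^sup>+x. ennreal (normal_density t 1 x) * indicator A x \<partial>lborel)"
    by (simp add: emeasure_density)
  also have "\<dots> = (\<integral>\<^sup>+x. ennreal (normal_density 0 1 x)
      * (ennreal (exp (t * x - t\<^sup>2 / 2)) * indicator A x) \<partial>lborel)"
    by (simp add: normal_density_shift[of t] ennreal_mult mult.assoc)
  also have "\<dots> = (\<integral>\<^sup>+x. ennreal (exp (t * x - t\<^sup>2 / 2)) * indicator A x \<partial>normal_measure 0)"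
    by (rule nn_integral_density[symmetric]) simp_all
  finally show ?thesis .
qed

lemma measure_normal_measure_shift_le:
  assumes A: "A \<in> sets borel" and K: "0 \<le> K"
    and bound: "\<And>x. x \<in> A \<Longrightarrow> exp (t * x - t\<^sup>2 / 2) \<le> K"
  shows "measure (normal_measure t) A \<le> K * measure (normal_measure 0) A"
proof -
  have "emeasure (normal_measure t) A \<le> (\<integral>\<^sup>+x. ennreal K * indicator A x \<partial>normal_measure 0)"
    unfolding emeasure_normal_measure_shift[OF A]
    using bound by (intro nn_integral_mono) (auto simp: indicator_def intro: ennreal_leI)
  also have "\<dots> = ennreal K * emeasure (normal_measure 0) A"
    using A by (simp add: nn_integral_cmult_indicator)
  finally show ?thesis
    using K by (simp add: emeasure_eq_measure_normal_measure ennreal_mult'[symmetric])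
qed

lemma measure_normal_measure_shift_ge:
  assumes A: "A \<in> sets borel" and K: "0 \<le> K"
    and bound: "\<And>x. x \<in> A \<Longrightarrow> K \<le> exp (t * x - t\<^sup>2 / 2)"
  shows "K * measure (normal_measure 0) A \<le> measure (normal_measure t) A"
proof -
  have "ennreal K * emeasure (normal_measure 0) A = (\<integral>\<^sup>+x. ennreal K * indicator A x \<partial>normal_measure 0)"
    using A by (simp add: nn_integral_cmult_indicator)
  also have "\<dots> \<le> emeasure (normal_measure t) A"
    unfolding emeasure_normal_measure_shift[OF A]
    using bound by (intro nn_integral_mono) (auto simp: indicator_def intro: ennreal_leI)
  finally show ?thesis
    using K by (simp add: emeasure_eq_measure_normal_measure ennreal_mult'[symmetric])
qed

text \<open>Monotone likelihood ratio: the density of \<open>N(t,1)\<close> with respect to \<open>N(0,1)\<close> is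
  \<open>exp (t x - t\<^sup>2 / 2)\<close>, a monotone function of \<open>t x\<close>.\<close>
lemma normal_measure_mlr:
  assumes A: "A \<in> sets borel" and B: "B \<in> sets borel"
    and AB: "\<And>x y. x \<in> A \<Longrightarrow> y \<in> B \<Longrightarrow> t * x \<le> t * y"
  shows "measure (normal_measure t) A * measure (normal_measure 0) B
    \<le> measure (normal_measure 0) A * measure (normal_measure t) B"
proof (cases "A = {} \<or> B = {}")
  case False
  then obtain y0 where y0: "y0 \<in> B" by blast
  define s where "s = (SUP x\<in>A. t * x)"
  have "bdd_above ((\<lambda>x. t * x) ` A)"
    using AB y0 by (intro bdd_aboveI2) auto
  then have s: "t * x \<le> s" if "x \<in> A" for x
    unfolding s_def using that by (rule cSUP_upper2) simp
  have s': "s \<le> t * y" if "y \<in> B" for y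
    unfolding s_def using False AB that by (intro cSUP_least) auto
  define K where "K = exp (s - t\<^sup>2 / 2)"
  have "measure (normal_measure t) A * measure (normal_measure 0) B
      \<le> K * measure (normal_measure 0) A * measure (normal_measure 0) B"
    using s by (intro mult_right_mono measure_normal_measure_shift_le[OF A]) (auto simp: K_def)
  also have "\<dots> = measure (normal_measure 0) A * (K * measure (normal_measure 0) B)"
    by simp
  also have "\<dots> \<le> measure (normal_measure 0) A * measure (normal_measure t) B"
    using s' by (intro mult_left_mono measure_normal_measure_shift_ge[OF B]) (auto simp: K_def)
  finally show ?thesis .
qed auto

lemma normal_measure_pos_pair:
  assumes A: "A \<in> sets borel" and B: "B \<in> sets borel" and disj: "A \<inter> B = {}"
    and below: "\<And>x y. x \<in> A \<Longrightarrow> y \<notin> A \<Longrightarrow> t * x \<le> t * y"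
    and cA: "measure (normal_measure 0) A \<le> c" and cB: "measure (normal_measure 0) B \<le> c"
  shows "pos_pair c (measure (normal_measure t) B) (measure (normal_measure t) A)"
proof -
  let ?P = "\<lambda>s. measure (normal_measure s)"
  have compl: "?P s (UNIV - X) = 1 - ?P s X" if "X \<in> sets borel" for s X
    using prob_space.prob_compl[OF prob_space_normal_measure, of X s] that by simp
  have union: "?P s (A \<union> B) = ?P s A + ?P s B" for s
    using finite_measure.finite_measure_Union[OF prob_space.finite_measure[OF prob_space_normal_measure]]
      A B disj by simp
  have bounds: "0 \<le> ?P t A" "?P t B \<le> 1"
    using prob_space.prob_le_1[OF prob_space_normal_measure] by auto
  txt \<open>Comparing \<open>A\<close> with its complement gives \<open>P\<^sub>t(A) \<le> P\<^sub>0(A)\<close>; comparing \<open>A\<close> with the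
    region outside \<open>A \<union> B\<close> gives the inequality below the segment.\<close>
  have "?P t A * ?P 0 (UNIV - A) \<le> ?P 0 A * ?P t (UNIV - A)"
    using A below by (intro normal_measure_mlr) auto
  then have le_A: "?P t A \<le> ?P 0 A"
    unfolding compl[OF A] by (simp add: algebra_simps)
  have "?P t A * ?P 0 (UNIV - (A \<union> B)) \<le> ?P 0 A * ?P t (UNIV - (A \<union> B))"
    using A B below by (intro normal_measure_mlr) auto
  then have "?P t A * (1 - ?P 0 B) \<le> ?P 0 A * (1 - ?P t B)"
    using A B unfolding compl[OF sets.Un[OF A B]] union by (simp add: algebra_simps)
  moreover have "?P t A * (1 - c) \<le> ?P t A * (1 - ?P 0 B)"
    using bounds cB by (intro mult_left_mono) auto
  moreover have "?P 0 A * (1 - ?P t B) \<le> c * (1 - ?P t B)"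
    using bounds cA by (intro mult_right_mono) auto
  ultimately show ?thesis
    using le_A cA unfolding pos_pair_def by linarith
qed

context real_distribution
begin

lemma bdd_above_cdf_le:
  assumes "c < 1"
  shows "bdd_above {x. cdf M x \<le> c}"
proof (rule ccontr)
  assume unbounded: "\<not> bdd_above {x. cdf M x \<le> c}"
  have "cdf M x \<le> c" for x
  proof -
    obtain y where "cdf M y \<le> c" "x < y"
      using unbounded unfolding bdd_above_def by (meson mem_Collect_eq not_le)
    then show ?thesis using cdf_nondecreasing[of x y] by simp
  qed
  then have "1 \<le> c"
    using tendsto_upperbound[OF cdf_lim_at_top_prob] by (simp add: always_eventually)
  with assms show False by simp
qed

lemma bdd_below_cdf_ge:
  assumes "0 < c"
  shows "bdd_below {x. c \<le> cdf M x}"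
proof (rule ccontr)
  assume unbounded: "\<not> bdd_below {x. c \<le> cdf M x}"
  have "c \<le> cdf M x" for x
  proof -
    obtain y where "c \<le> cdf M y" "y < x"
      using unbounded unfolding bdd_below_def by (meson mem_Collect_eq not_le)
    then show ?thesis using cdf_nondecreasing[of y x] by simp
  qed
  then have "c \<le> 0"
    using tendsto_lowerbound[OF cdf_lim_at_bot, of c] by (simp add: always_eventually)
  with assms show False by simp
qed

lemma measure_atLeast: "measure M {x..} = 1 - cdf M x + measure M {x}"
proof -
  have "measure M {x..} = measure M ({x<..} \<union> {x})"
    by (rule arg_cong[where f = "measure M"]) auto
  also have "\<dots> = measure M (space M - {..x}) + measure M {x}"
    by (subst finite_measure_Union) (auto intro!: arg_cong[where f = "measure M"])
  also have "measure M (space M - {..x}) = 1 - cdf M x"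
    unfolding cdf_def by (rule prob_compl) (simp add: atMost_borel)
  finally show ?thesis .
qed

lemma measure_cdf_le:
  assumes atomless: "\<And>x. measure M {x} = 0" and c: "0 \<le> c" "c < 1"
  shows "measure M {x. cdf M x \<le> c} \<le> c"
proof (cases "{x. cdf M x \<le> c} = {}")
  case False
  let ?L = "{x. cdf M x \<le> c}"
  have bdd: "bdd_above ?L"
    using c(2) by (rule bdd_above_cdf_le)
  have "continuous_on UNIV (cdf M)"
    using atomless isCont_cdf by (simp add: continuous_at_imp_continuous_on)
  then have "Sup ?L \<in> ?L"
    by (intro closed_contains_Sup[OF False bdd] closed_Collect_le continuous_on_const)
  moreover have "?L \<subseteq> {..Sup ?L}"
    using bdd by (auto intro: cSup_upper)
  then have "measure M ?L \<le> cdf M (Sup ?L)"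
    unfolding cdf_def by (intro finite_measure_mono) (simp_all add: atMost_borel)
  ultimately show ?thesis by simp
qed (use c in simp)

lemma measure_one_minus_cdf_le:
  assumes atomless: "\<And>x. measure M {x} = 0" and c: "0 \<le> c" "c < 1"
  shows "measure M {x. 1 - cdf M x \<le> c} \<le> c"
proof (cases "{x. 1 - cdf M x \<le> c} = {}")
  case False
  let ?U = "{x. 1 - cdf M x \<le> c}"
  have bdd: "bdd_below ?U"
    using bdd_below_cdf_ge[of "1 - c"] c by (simp add: algebra_simps)
  have "continuous_on UNIV (cdf M)"
    using atomless isCont_cdf by (simp add: continuous_at_imp_continuous_on)
  then have "Inf ?U \<in> ?U"
    by (intro closed_contains_Inf[OF False bdd] closed_Collect_le continuous_intros)
  moreover have "?U \<subseteq> {Inf ?U..}"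
    using bdd by (auto intro: cInf_lower)
  then have "measure M ?U \<le> measure M {Inf ?U..}"
    by (intro finite_measure_mono) (simp_all add: atLeast_borel)
  ultimately show ?thesis
    using measure_atLeast atomless by simp
qed (use c in simp)

end

lemma real_distribution_normal_measure: "real_distribution (normal_measure t)"
  using prob_space_normal_measure by (simp add: real_distribution_def real_distribution_axioms_def)

lemma measure_normal_measure_singleton: "measure (normal_measure t) {x} = 0"
proof -
  have "emeasure (normal_measure t) {x} = 0"
    using AE_lborel_singleton[of x] by (simp add: emeasure_density AE_iff_nn_integral)
  then show ?thesis by (simp add: measure_def)
qed

lemma Phi_eq_cdf: "Phi = cdf (normal_measure 0)"
  by (simp add: fun_eq_iff Phi_def cdf_def)

lemma mono_Phi: "mono Phi"
proof -
  interpret real_distribution "normal_measure 0"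
    by (rule real_distribution_normal_measure)
  show ?thesis
    unfolding Phi_eq_cdf by (intro monoI cdf_nondecreasing)
qed

section \<open>The Bonferroni partial conjunction test\<close>

lemma ord_stat_le_imp_card_le:
  assumes r: "1 \<le> r" "r \<le> n" and le: "ord_stat n f r \<le> c"
  shows "r \<le> card {i. i < n \<and> f i \<le> c}"
proof -
  define xs where "xs = sort (map f [0..<n])"
  have "{..<r} \<subseteq> {j. j < length xs \<and> xs ! j \<le> c}"
  proof
    fix j assume "j \<in> {..<r}"
    then have j: "j \<le> r - 1" "r - 1 < length xs"
      using r by (auto simp: xs_def)
    then have "xs ! j \<le> xs ! (r - 1)"
      by (intro sorted_nth_mono) (auto simp: xs_def)
    then show "j \<in> {j. j < length xs \<and> xs ! j \<le> c}"
      using j le by (auto simp: ord_stat_def xs_def)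
  qed
  then have "r \<le> card {j. j < length xs \<and> xs ! j \<le> c}"
    using card_mono[of "{j. j < length xs \<and> xs ! j \<le> c}" "{..<r}"] by simp
  also have "\<dots> = length (filter (\<lambda>x. x \<le> c) xs)"
    by (rule length_filter_conv_card[symmetric])
  also have "\<dots> = length (filter (\<lambda>x. x \<le> c) (map f [0..<n]))"
    unfolding xs_def by (simp add: filter_sort)
  also have "\<dots> = card {i. i < n \<and> f i \<le> c}"
    by (subst length_filter_conv_card) (rule arg_cong[where f = card], auto)
  finally show ?thesis .
qed

lemma min_p_plus_p_minus_le_imp_card:
  assumes r: "1 \<le> r" "r \<le> n"
    and le: "min (p_plus n r T) (p_minus n r T) \<le> real (n - r + 1) * c"
  shows "r \<le> card {i. i < n \<and> T i \<in> {t. 1 - Phi t \<le> c}}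
    \<or> r \<le> card {i. i < n \<and> T i \<in> {t. Phi t \<le> c}}"
proof -
  have "ord_stat n (pval T) r \<le> c \<or> ord_stat n (qval T) r \<le> c"
    using le by (auto simp: p_plus_def p_minus_def min_le_iff_disj)
  then show ?thesis
    using ord_stat_le_imp_card_le[OF r, of "pval T" c] ord_stat_le_imp_card_le[OF r, of "qval T" c]
    unfolding pval_def qval_def by auto
qed

lemma sets_borel_Phi_le:
  "{t. Phi t \<le> c} \<in> sets borel" "{t. 1 - Phi t \<le> c} \<in> sets borel"
proof -
  have [measurable]: "Phi \<in> borel_measurable borel"
    by (rule borel_measurable_mono[OF mono_Phi])
  show "{t. Phi t \<le> c} \<in> sets borel" "{t. 1 - Phi t \<le> c} \<in> sets borel"
    by measurable
qed

lemma admissible_at_normal_measure: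
  assumes c: "0 < c" "c < 1/2" and P: "i \<in> P \<longleftrightarrow> 0 < t" and Q: "i \<in> Q \<longleftrightarrow> t < 0"
  shows "admissible_at c P Q i
    (measure (normal_measure t) {x. 1 - Phi x \<le> c}) (measure (normal_measure t) {x. Phi x \<le> c})"
proof -
  define U where "U = {x. 1 - Phi x \<le> c}"
  define L where "L = {x. Phi x \<le> c}"
  interpret N0: real_distribution "normal_measure 0"
    by (rule real_distribution_normal_measure)
  have sets: "U \<in> sets borel" "L \<in> sets borel"
    unfolding U_def L_def by (rule sets_borel_Phi_le)+
  have small: "measure (normal_measure 0) U \<le> c" "measure (normal_measure 0) L \<le> c"
    unfolding U_def L_def Phi_eq_cdf using c measure_normal_measure_singleton
    by (intro N0.measure_one_minus_cdf_le N0.measure_cdf_le; simp)+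
  have disj: "U \<inter> L = {}"
    using c unfolding U_def L_def by auto
  have "pos_pair c (measure (normal_measure t) U) (measure (normal_measure t) L)" if "0 < t"
  proof (rule normal_measure_pos_pair[OF sets(2) sets(1)])
    show "t * x \<le> t * y" if "x \<in> L" "y \<notin> L" for x y
      using \<open>0 < t\<close> that monoD[OF mono_Phi, of y x] unfolding L_def
      by (cases "x \<le> y") (auto intro: mult_left_mono)
  qed (use disj small in auto)
  moreover have "pos_pair c (measure (normal_measure t) L) (measure (normal_measure t) U)" if "t < 0"
  proof (rule normal_measure_pos_pair[OF sets(1) sets(2)])
    show "t * x \<le> t * y" if "x \<in> U" "y \<notin> U" for x y
      using \<open>t < 0\<close> that monoD[OF mono_Phi, of x y] unfolding U_def
      by (cases "y \<le> x") (auto intro: mult_left_mono_neg)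
  qed (use disj small in auto)
  ultimately show ?thesis
    using P Q small prob_space.prob_le_1[OF prob_space_normal_measure]
    unfolding admissible_at_def U_def[symmetric] L_def[symmetric]
    by (cases t "0 :: real" rule: linorder_cases) auto
qed

lemma measure_min_p_plus_p_minus_le:
  assumes c: "0 < c" "c < 1/2" and r: "n + 2 \<le> 2 * r" "r \<le> n"
    and pos: "card {i \<in> {..<n}. \<theta> i > 0} < r" and neg: "card {i \<in> {..<n}. \<theta> i < 0} < r"
  shows "measure (T_law n \<theta>) {T \<in> space (T_law n \<theta>).
    min (p_plus n r T) (p_minus n r T) \<le> real (n - r + 1) * c} \<le> real (n + 1 - r) * c"
proof -
  let ?M = "\<lambda>i. normal_measure (\<theta> i)"
  let ?E = "\<lambda>A. {T \<in> space (PiM {..<n} ?M). r \<le> card {i. i < n \<and> T i \<in> A}}"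
  let ?U = "{x. 1 - Phi x \<le> c}" and ?L = "{x. Phi x \<le> c}"
  interpret prob_space "PiM {..<n} ?M"
    by (intro prob_space_PiM prob_space_normal_measure)
  have sets: "?E A \<in> events" if "A \<in> sets borel" for A
    by (rule sets_PiM_count_ge) (simp add: that)
  have count: "prob (?E A) = pbinom_tail (\<lambda>i. measure (?M i) A) n r" if "A \<in> sets borel" for A
    by (rule measure_PiM_count_ge) (simp_all add: prob_space_normal_measure that)
  have "{T \<in> space (T_law n \<theta>). min (p_plus n r T) (p_minus n r T) \<le> real (n - r + 1) * c}
      \<subseteq> ?E ?U \<union> ?E ?L"
    using min_p_plus_p_minus_le_imp_card[of r n] r unfolding T_law_def by auto
  then have "measure (T_law n \<theta>) {T \<in> space (T_law n \<theta>).
      min (p_plus n r T) (p_minus n r T) \<le> real (n - r + 1) * c} \<le> prob (?E ?U \<union> ?E ?L)"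
    unfolding T_law_def by (rule finite_measure_mono) (intro sets.Un sets sets_borel_Phi_le)
  also have "\<dots> \<le> prob (?E ?U) + prob (?E ?L)"
    by (intro measure_subadditive sets sets_borel_Phi_le) auto
  also have "\<dots> = pbinom_tail (\<lambda>i. measure (?M i) ?U) n r + pbinom_tail (\<lambda>i. measure (?M i) ?L) n r"
    by (simp only: count sets_borel_Phi_le)
  also have "\<dots> \<le> real (n + 1 - r) * c"
  proof (rule admissible_pbinom_tail_le[OF _ c(1) _ _ _ pos neg r(1)])
    show "admissible c {i \<in> {..<n}. \<theta> i > 0} {i \<in> {..<n}. \<theta> i < 0} n
        (\<lambda>i. measure (?M i) ?U) (\<lambda>i. measure (?M i) ?L)"
      unfolding admissible_def using c by (auto intro: admissible_at_normal_measure)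
  qed (use c in auto)
  finally show ?thesis .
qed

theorem theorem1:
  fixes n r :: nat and \<theta> :: "nat \<Rightarrow> real" and \<alpha> :: real
  assumes "n \<ge> 1"
    and "real n + 1 < 2 * real r" and "r \<le> n"
    and "0 < \<alpha>" and "\<alpha> < 1/2"
    and "card {i \<in> {..<n}. \<theta> i > 0} < r"
    and "card {i \<in> {..<n}. \<theta> i < 0} < r"
  shows "measure (T_law n \<theta>)
           {T \<in> space (T_law n \<theta>). min (p_plus n r T) (p_minus n r T) \<le> \<alpha>} \<le> \<alpha>"
proof -
  define c where "c = \<alpha> / real (n - r + 1)"
  have \<alpha>: "\<alpha> = real (n - r + 1) * c" "real (n + 1 - r) * c = \<alpha>"
    using assms(3) unfolding c_def by (simp_all add: Suc_diff_le)
  have c: "0 < c" "c < 1/2"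
  proof -
    show "0 < c"
      unfolding c_def using assms(4) by simp
    then have "c \<le> real (n - r + 1) * c"
      using mult_right_mono[of 1 "real (n - r + 1)" c] by simp
    then show "c < 1/2"
      using \<alpha>(1) assms(5) by linarith
  qed
  have "n + 2 \<le> 2 * r"
    using assms(2) by linarith
  from measure_min_p_plus_p_minus_le[OF c this assms(3,6,7)] show ?thesis
    unfolding \<alpha>(2) \<alpha>(1)[symmetric] .
qed

end
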